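(* Let $p$ be an odd prime and $s\in\mathbb{Z}_p$ with $-2s=1$. For $x_1,x_2,y_1,y_2,w,v\in\mathbb{Z}_p$ consider the system in unknowns $(b_1,b_2)\in\mathbb{Z}_p^2$: $$b_1x_1+sb_1(1-b_1)y_1+b_2x_2+sb_2(1-b_2)y_2=w,\qquad b_1y_1+b_2y_2=v,$$ and let $\Delta:=(2wy_1+vy_1-v^2-2vx_1)(y_1+y_2)y_2+(vy_2+x_1y_2-x_2y_1)^2$. If $y_1,y_2,y_1+y_2\neq0$, then the system has exactly two solutions when $\Delta$ is a nonzero square in $\mathbb{Z}_p$, namely $b_1=\frac{vy_1+x_2y_1-x_1y_2\pm\sqrt\Delta}{y_1(y_1+y_2)}$, $b_2=\frac{vy_2+x_1y_2-x_2y_1\mp\sqrt\Delta}{y_2(y_1+y_2)}$; exactly one solution when $\Delta=0$; and none when $\Delta$ is a nonsquare. Moreover, if $(x_1,x_2,y_1,y_2,w,v)$ is uniformly random in $\mathbb{Z}_p^6$ and $\eta$ denotes the number of solutions, then conditioned on $y_1,y_2,y_1+y_2\neq0$ we have $\Pr(\eta=0)=\Pr(\eta=2)=\frac12-\frac1{2p}$ and $\Pr(\eta=1)=\frac1p$. *)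

theory Defs
  imports Main "Berlekamp_Zassenhaus.Finite_Field"
begin

text \<open>Z_p is modelled as the prime field type 'p mod_ring with p = CARD('p) prime.\<close>

definition solset :: "'a::field \<Rightarrow> 'a \<Rightarrow> 'a \<Rightarrow> 'a \<Rightarrow> 'a \<Rightarrow> 'a \<Rightarrow> 'a \<Rightarrow> ('a \<times> 'a) set" where
  "solset s x1 x2 y1 y2 w v = {(b1, b2).
     b1 * x1 + s * b1 * (1 - b1) * y1 + b2 * x2 + s * b2 * (1 - b2) * y2 = w \<and>
     b1 * y1 + b2 * y2 = v}"

definition Delta :: "'a::field \<Rightarrow> 'a \<Rightarrow> 'a \<Rightarrow> 'a \<Rightarrow> 'a \<Rightarrow> 'a \<Rightarrow> 'a" where
  "Delta x1 x2 y1 y2 w v =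
     (2 * w * y1 + v * y1 - v ^ 2 - 2 * v * x1) * (y1 + y2) * y2 + (v * y2 + x1 * y2 - x2 * y1) ^ 2"

definition is_square :: "'a::field \<Rightarrow> bool" where
  "is_square a \<longleftrightarrow> (\<exists>r. r ^ 2 = a)"

definition cond_event :: "('a::field \<times> 'a \<times> 'a \<times> 'a \<times> 'a \<times> 'a) set" where
  "cond_event = {(x1, x2, y1, y2, w, v). y1 \<noteq> 0 \<and> y2 \<noteq> 0 \<and> y1 + y2 \<noteq> 0}"

definition eta :: "'a::field \<Rightarrow> 'a \<times> 'a \<times> 'a \<times> 'a \<times> 'a \<times> 'a \<Rightarrow> nat" where
  "eta s t = (case t of (x1, x2, y1, y2, w, v) \<Rightarrow> card (solset s x1 x2 y1 y2 w v))"

definition cond_prob_eta :: "'a::{field,finite} \<Rightarrow> nat \<Rightarrow> real" where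
  "cond_prob_eta s k =
     real (card {t \<in> (cond_event :: ('a \<times> 'a \<times> 'a \<times> 'a \<times> 'a \<times> 'a) set). eta s t = k})
     / real (card (cond_event :: ('a \<times> 'a \<times> 'a \<times> 'a \<times> 'a \<times> 'a) set))"

end

theory Submission
  imports Defs
begin

(* Solving the linear equation for b2 and completing the square in b1 (this uses 2 s = -1)
   turns the system into  b1 y1 + b2 y2 = v,  (y1 (y1 + y2) b1 - K)^2 = Delta  with
   K = v y1 + x2 y1 - x1 y2, so the solutions correspond to the square roots of Delta.
   For the probabilities, fix (x1, x2, y1, y2, v) with y1 y2 (y1 + y2) <> 0: then Delta is an
   affine function of w with nonzero slope 2 y1 (y1 + y2) y2, hence uniformly distributed, and
   in odd characteristic exactly (p - 1) / 2 of the p - 1 nonzero elements are squares. *)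

lemma two_neq_zero_if_minus_two_mult_eq_one:
  fixes s :: "'a::field"
  assumes "- 2 * s = 1"
  shows "(2::'a) \<noteq> 0"
  using assms by auto

lemma completing_square:
  fixes s x1 x2 y1 y2 w v b1 b2 :: "'a::field"
  assumes s: "- 2 * s = 1" and lin: "b1 * y1 + b2 * y2 = v"
  shows "(y1 * (y1 + y2) * b1 - (v * y1 + x2 * y1 - x1 * y2))\<^sup>2 - Delta x1 x2 y1 y2 w v
       = 2 * y1 * (y1 + y2) * y2 *
         (b1 * x1 + s * b1 * (1 - b1) * y1 + b2 * x2 + s * b2 * (1 - b2) * y2 - w)"
proof -
  have two: "(2::'a) \<noteq> 0"
    using two_neq_zero_if_minus_two_mult_eq_one[OF s] .
  then have s_half: "s = - 1 / 2"
    using s by (simp add: field_simps minus_equation_iff)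
  have "(4::'a) \<noteq> 0"
    using two by (metis mult_2_right mult_eq_0_iff numeral_Bit0)
  then show ?thesis
    unfolding Delta_def lin[symmetric] s_half using two by (simp add: field_simps power2_eq_square)
qed

lemma solset_iff:
  fixes s x1 x2 y1 y2 w v b1 b2 :: "'a::field"
  assumes s: "- 2 * s = 1" and y: "y1 \<noteq> 0" "y2 \<noteq> 0" "y1 + y2 \<noteq> 0"
  shows "(b1, b2) \<in> solset s x1 x2 y1 y2 w v \<longleftrightarrow>
    b1 * y1 + b2 * y2 = v \<and>
    (y1 * (y1 + y2) * b1 - (v * y1 + x2 * y1 - x1 * y2))\<^sup>2 = Delta x1 x2 y1 y2 w v"
proof -
  have "2 * y1 * (y1 + y2) * y2 \<noteq> 0"
    using two_neq_zero_if_minus_two_mult_eq_one[OF s] y by simp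
  then show ?thesis
    using completing_square[OF s, of b1 y1 b2 y2 v x2 x1 w]
    unfolding solset_def by (auto simp: right_minus_eq)
qed

lemma linear_system_iff:
  fixes x1 x2 y1 y2 v b1 b2 e :: "'a::field"
  assumes y: "y1 \<noteq> 0" "y2 \<noteq> 0" "y1 + y2 \<noteq> 0"
  shows "b1 * y1 + b2 * y2 = v \<and> y1 * (y1 + y2) * b1 - (v * y1 + x2 * y1 - x1 * y2) = e \<longleftrightarrow>
    b1 = (v * y1 + x2 * y1 - x1 * y2 + e) / (y1 * (y1 + y2)) \<and>
    b2 = (v * y2 + x1 * y2 - x2 * y1 - e) / (y2 * (y1 + y2))"
proof -
  have "y1 * (y1 + y2) \<noteq> 0" "y2 * (y1 + y2) \<noteq> 0"
    using y by simp_all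
  moreover have "(b1 * y1 + b2 * y2 - v) * (y1 + y2) =
      (b1 * (y1 * (y1 + y2)) - (v * y1 + x2 * y1 - x1 * y2 + e))
      + (b2 * (y2 * (y1 + y2)) - (v * y2 + x1 * y2 - x2 * y1 - e))"
    by (simp add: algebra_simps)
  moreover have "b1 * (y1 * (y1 + y2)) - (v * y1 + x2 * y1 - x1 * y2 + e) =
      y1 * (y1 + y2) * b1 - (v * y1 + x2 * y1 - x1 * y2) - e"
    by (simp add: algebra_simps)
  ultimately show ?thesis
    using y(3) by (metis (no_types, lifting) add_0 eq_iff_diff_eq_0 mult_eq_0_iff nonzero_eq_divide_eq)
qed

lemma solset_eq_roots:
  fixes s x1 x2 y1 y2 w v r :: "'a::field"
  assumes s: "- 2 * s = 1" and y: "y1 \<noteq> 0" "y2 \<noteq> 0" "y1 + y2 \<noteq> 0"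
    and r: "r\<^sup>2 = Delta x1 x2 y1 y2 w v"
  shows "solset s x1 x2 y1 y2 w v =
    {((v * y1 + x2 * y1 - x1 * y2 + r) / (y1 * (y1 + y2)),
      (v * y2 + x1 * y2 - x2 * y1 - r) / (y2 * (y1 + y2))),
     ((v * y1 + x2 * y1 - x1 * y2 - r) / (y1 * (y1 + y2)),
      (v * y2 + x1 * y2 - x2 * y1 + r) / (y2 * (y1 + y2)))}" (is "_ = ?roots")
proof (rule Set.set_eqI)
  fix b :: "'a \<times> 'a"
  obtain b1 b2 where b: "b = (b1, b2)"
    by fastforce
  show "b \<in> solset s x1 x2 y1 y2 w v \<longleftrightarrow> b \<in> ?roots"
    using linear_system_iff[OF y, of b1 b2 v x2 x1 r] linear_system_iff[OF y, of b1 b2 v x2 x1 "- r"]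
    unfolding b solset_iff[OF s y] r[symmetric] power2_eq_iff by auto
qed

lemma card_solset_nonzero_square:
  fixes s x1 x2 y1 y2 w v :: "'a::field"
  assumes s: "- 2 * s = 1" and y: "y1 \<noteq> 0" "y2 \<noteq> 0" "y1 + y2 \<noteq> 0"
    and "Delta x1 x2 y1 y2 w v \<noteq> 0" "is_square (Delta x1 x2 y1 y2 w v)"
  shows "card (solset s x1 x2 y1 y2 w v) = 2"
proof -
  obtain r where r: "r\<^sup>2 = Delta x1 x2 y1 y2 w v" and "r \<noteq> 0"
    using assms(5,6) unfolding is_square_def by force
  then have "r \<noteq> - r"
    using two_neq_zero_if_minus_two_mult_eq_one[OF s] by (simp add: eq_neg_iff_add_eq_0 flip: mult_2)
  with y show ?thesis
    unfolding solset_eq_roots[OF s y r] by (simp add: divide_cancel_right)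
qed

lemma card_solset_Delta_zero:
  fixes s x1 x2 y1 y2 w v :: "'a::field"
  assumes s: "- 2 * s = 1" and y: "y1 \<noteq> 0" "y2 \<noteq> 0" "y1 + y2 \<noteq> 0"
    and "Delta x1 x2 y1 y2 w v = 0"
  shows "card (solset s x1 x2 y1 y2 w v) = 1"
  using solset_eq_roots[OF s y, of 0] assms(5) by simp

lemma solset_nonsquare:
  fixes s x1 x2 y1 y2 w v :: "'a::field"
  assumes s: "- 2 * s = 1" and y: "y1 \<noteq> 0" "y2 \<noteq> 0" "y1 + y2 \<noteq> 0"
    and "\<not> is_square (Delta x1 x2 y1 y2 w v)"
  shows "solset s x1 x2 y1 y2 w v = {}"
  using assms(5) solset_iff[OF s y] unfolding is_square_def by fast

definition cond_event_xyv :: "('a::field \<times> 'a \<times> 'a \<times> 'a \<times> 'a) set" where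
  "cond_event_xyv = {(x1, x2, y1, y2, v). y1 \<noteq> 0 \<and> y2 \<noteq> 0 \<and> y1 + y2 \<noteq> 0}"

definition Delta_tuple :: "'a::field \<times> 'a \<times> 'a \<times> 'a \<times> 'a \<times> 'a \<Rightarrow> 'a" where
  "Delta_tuple = (\<lambda>(x1, x2, y1, y2, w, v). Delta x1 x2 y1 y2 w v)"

lemma Delta_affine_in_w:
  "Delta x1 x2 y1 y2 w v = 2 * y1 * (y1 + y2) * y2 * w + Delta x1 x2 y1 y2 0 v"
  unfolding Delta_def by (simp add: algebra_simps)

definition w_of_Delta :: "'a::field \<Rightarrow> 'a \<Rightarrow> 'a \<Rightarrow> 'a \<Rightarrow> 'a \<Rightarrow> 'a \<Rightarrow> 'a" where
  "w_of_Delta x1 x2 y1 y2 v d = (d - Delta x1 x2 y1 y2 0 v) / (2 * y1 * (y1 + y2) * y2)"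

lemma Delta_w_of_Delta:
  fixes x1 x2 y1 y2 w v d :: "'a::field"
  assumes "(2::'a) \<noteq> 0" "y1 \<noteq> 0" "y2 \<noteq> 0" "y1 + y2 \<noteq> 0"
  shows "Delta x1 x2 y1 y2 (w_of_Delta x1 x2 y1 y2 v d) v = d"
  using assms by (subst Delta_affine_in_w) (simp add: w_of_Delta_def)

lemma w_of_Delta_Delta:
  fixes x1 x2 y1 y2 w v d :: "'a::field"
  assumes "(2::'a) \<noteq> 0" "y1 \<noteq> 0" "y2 \<noteq> 0" "y1 + y2 \<noteq> 0"
  shows "w_of_Delta x1 x2 y1 y2 v (Delta x1 x2 y1 y2 w v) = w"
  using assms by (subst Delta_affine_in_w) (simp add: w_of_Delta_def)

lemma bij_betw_cond_event_Delta:
  assumes two: "(2::'a::field) \<noteq> 0"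
  shows "bij_betw (\<lambda>(x1, x2, y1, y2, w, v). ((x1, x2, y1, y2, v), Delta x1 x2 y1 y2 w v))
    {t \<in> cond_event. P (Delta_tuple t)} (cond_event_xyv \<times> {d::'a. P d})"
  by (rule bij_betw_byWitness[where f' =
        "\<lambda>((x1, x2, y1, y2, v), d). (x1, x2, y1, y2, w_of_Delta x1 x2 y1 y2 v d, v)"])
    (auto simp: cond_event_def cond_event_xyv_def Delta_tuple_def two
      Delta_w_of_Delta w_of_Delta_Delta)

lemma card_cond_event_Delta:
  assumes "(2::'a::{field,finite}) \<noteq> 0"
  shows "card {t \<in> cond_event. P (Delta_tuple t)} =
    card (cond_event_xyv :: ('a \<times> 'a \<times> 'a \<times> 'a \<times> 'a) set) * card {d::'a. P d}"
  using bij_betw_same_card[OF bij_betw_cond_event_Delta[OF assms]]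
  by (simp add: card_cartesian_product)

lemma cond_prob_eta_eq_card:
  fixes s :: "'a::{field,finite}"
  assumes two: "(2::'a) \<noteq> 0"
    and eta_iff: "\<And>t. t \<in> cond_event \<Longrightarrow> eta s t = k \<longleftrightarrow> P (Delta_tuple t)"
  shows "cond_prob_eta s k = card {d. P d} / CARD('a)"
proof -
  let ?N = "card (cond_event_xyv :: ('a \<times> 'a \<times> 'a \<times> 'a \<times> 'a) set)"
  have "(0, 0, 1, 1, 0) \<in> (cond_event_xyv :: ('a \<times> 'a \<times> 'a \<times> 'a \<times> 'a) set)"
    using two by (simp add: cond_event_xyv_def)
  then have "?N \<noteq> 0"
    by (auto simp: card_eq_0_iff)
  moreover have "{t \<in> cond_event. eta s t = k} = {t \<in> cond_event. P (Delta_tuple t)}"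
    using eta_iff by blast
  moreover have "card (cond_event :: ('a \<times> 'a \<times> 'a \<times> 'a \<times> 'a \<times> 'a) set) = ?N * CARD('a)"
    using card_cond_event_Delta[OF two, of "\<lambda>_. True"] by simp
  ultimately show ?thesis
    unfolding cond_prob_eta_def by (simp add: card_cond_event_Delta[OF two])
qed

lemma eta_iff_Delta:
  fixes s :: "'a::field"
  assumes s: "- 2 * s = 1" and t: "t \<in> cond_event"
  shows "eta s t = 0 \<longleftrightarrow> \<not> is_square (Delta_tuple t)"
    and "eta s t = 1 \<longleftrightarrow> Delta_tuple t = 0"
    and "eta s t = 2 \<longleftrightarrow> Delta_tuple t \<noteq> 0 \<and> is_square (Delta_tuple t)"
proof -
  obtain x1 x2 y1 y2 w v where t_eq: "t = (x1, x2, y1, y2, w, v)"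
    by (rule prod_cases6)
  with t have y: "y1 \<noteq> 0" "y2 \<noteq> 0" "y1 + y2 \<noteq> 0"
    by (simp_all add: cond_event_def)
  have square_0: "is_square (0::'a)"
    unfolding is_square_def by simp
  then have "eta s t = (if \<not> is_square (Delta_tuple t) then 0 else if Delta_tuple t = 0 then 1 else 2)"
    using card_solset_nonzero_square[OF s y] card_solset_Delta_zero[OF s y] solset_nonsquare[OF s y]
    by (simp add: t_eq eta_def Delta_tuple_def)
  then show "eta s t = 0 \<longleftrightarrow> \<not> is_square (Delta_tuple t)"
    and "eta s t = 1 \<longleftrightarrow> Delta_tuple t = 0"
    and "eta s t = 2 \<longleftrightarrow> Delta_tuple t \<noteq> 0 \<and> is_square (Delta_tuple t)"
    using square_0 by auto
qed

lemma card_nonzero_squares: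
  assumes two: "(2::'a::{field,finite}) \<noteq> 0"
  shows "2 * card {d::'a. d \<noteq> 0 \<and> is_square d} = CARD('a) - 1"
proof -
  let ?Q = "{d::'a. d \<noteq> 0 \<and> is_square d}"
  have fibre: "card {x. x\<^sup>2 = q} = 2" if "q \<in> ?Q" for q
  proof -
    from that obtain r where r: "r\<^sup>2 = q"
      unfolding is_square_def by blast
    with that have "r \<noteq> - r"
      using two by (auto simp: eq_neg_iff_add_eq_0 simp flip: mult_2)
    moreover have "{x. x\<^sup>2 = q} = {r, - r}"
      unfolding r[symmetric] by (auto simp: power2_eq_iff)
    ultimately show ?thesis
      by simp
  qed
  have "UNIV - {0} = (\<Union>q\<in>?Q. {x::'a. x\<^sup>2 = q})"
    by (auto simp: is_square_def)
  then have "card (UNIV - {0::'a}) = (\<Sum>q\<in>?Q. card {x. x\<^sup>2 = q})"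
    by (simp only:) (rule card_UN_disjoint, auto)
  also have "\<dots> = (\<Sum>q\<in>?Q. 2)"
    using fibre by simp
  finally show ?thesis
    by simp
qed

lemma card_nonsquares:
  assumes two: "(2::'a::{field,finite}) \<noteq> 0"
  shows "2 * card {d::'a. \<not> is_square d} = CARD('a) - 1"
proof -
  have "{d::'a. \<not> is_square d} = (UNIV - {0}) - {d. d \<noteq> 0 \<and> is_square d}"
    by (auto simp: is_square_def)
  then have "card {d::'a. \<not> is_square d} = (CARD('a) - 1) - card {d::'a. d \<noteq> 0 \<and> is_square d}"
    by (simp add: card_Diff_subset card_Diff_singleton subset_iff)
  with card_nonzero_squares[OF two] show ?thesis
    by simp
qed

lemma real_div_eq_half_minus:
  fixes c n :: nat
  assumes "2 * c = n - 1" and "0 < n"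
  shows "real c / real n = 1 / 2 - 1 / (2 * real n)"
proof -
  have "2 * real c = real n - 1"
    using assms by (simp add: of_nat_diff flip: of_nat_mult)
  with assms(2) show ?thesis
    by (simp add: field_simps)
qed

theorem mainTheorem9:
  fixes s :: "'p::prime_card mod_ring"
  assumes odd_p: "odd (CARD('p))"
    and s_def: "- 2 * s = 1"
  shows
    "(\<forall>x1 x2 y1 y2 w v :: 'p mod_ring.
        y1 \<noteq> 0 \<and> y2 \<noteq> 0 \<and> y1 + y2 \<noteq> 0 \<longrightarrow>
        (Delta x1 x2 y1 y2 w v \<noteq> 0 \<and> is_square (Delta x1 x2 y1 y2 w v) \<longrightarrow>
           card (solset s x1 x2 y1 y2 w v) = 2 \<and>
           (\<forall>r. r ^ 2 = Delta x1 x2 y1 y2 w v \<longrightarrow>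
              solset s x1 x2 y1 y2 w v =
                {((v * y1 + x2 * y1 - x1 * y2 + r) / (y1 * (y1 + y2)),
                  (v * y2 + x1 * y2 - x2 * y1 - r) / (y2 * (y1 + y2))),
                 ((v * y1 + x2 * y1 - x1 * y2 - r) / (y1 * (y1 + y2)),
                  (v * y2 + x1 * y2 - x2 * y1 + r) / (y2 * (y1 + y2)))})) \<and>
        (Delta x1 x2 y1 y2 w v = 0 \<longrightarrow> card (solset s x1 x2 y1 y2 w v) = 1) \<and>
        (\<not> is_square (Delta x1 x2 y1 y2 w v) \<longrightarrow> solset s x1 x2 y1 y2 w v = {}))
     \<and> cond_prob_eta s 0 = 1 / 2 - 1 / (2 * real CARD('p))
     \<and> cond_prob_eta s 2 = 1 / 2 - 1 / (2 * real CARD('p))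
     \<and> cond_prob_eta s 1 = 1 / real CARD('p)"
proof -
  have two: "(2::'p mod_ring) \<noteq> 0"
    using two_neq_zero_if_minus_two_mult_eq_one[OF s_def] .
  have prob_0: "cond_prob_eta s 0 = 1 / 2 - 1 / (2 * real CARD('p))"
    using cond_prob_eta_eq_card[OF two eta_iff_Delta(1)[OF s_def]]
      real_div_eq_half_minus[OF card_nonsquares[OF two]] by simp
  have prob_2: "cond_prob_eta s 2 = 1 / 2 - 1 / (2 * real CARD('p))"
    using cond_prob_eta_eq_card[OF two eta_iff_Delta(3)[OF s_def]]
      real_div_eq_half_minus[OF card_nonzero_squares[OF two]] by simp
  have prob_1: "cond_prob_eta s 1 = 1 / real CARD('p)"
    using cond_prob_eta_eq_card[OF two eta_iff_Delta(2)[OF s_def]] by simp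
  show ?thesis
    by (intro conjI allI impI; (elim conjE)?;
        rule card_solset_nonzero_square[OF s_def] solset_eq_roots[OF s_def]
          card_solset_Delta_zero[OF s_def] solset_nonsquare[OF s_def] prob_0 prob_1 prob_2;
        assumption)
qed

end
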